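(* In the $n$-node line network described in the context, with rates $\mu_0,\ldots,\mu_{n-1}>0$, for every integer $m\ge1$ the stationary $m$th moment age vector exists and equals $$\lim_{t\to\infty}\left[\mathbb{E}[x_1^m(t)]\ \ \mathbb{E}[x_2^m(t)]\ \cdots\ \mathbb{E}[x_n^m(t)]\right]=m!\,[1\ \cdots\ 1]\,\mathbf{U}^m,$$ where $\mathbf{U}$ is the $n\times n$ upper triangular matrix whose row $i$ (indexed $i=0,\ldots,n-1$) has entries $1/\mu_i$ in columns $i,i+1,\ldots,n-1$ and $0$ in columns $0,\ldots,i-1$.
   Context: The line network is the following age process. There are monitors at nodes $1,\ldots,n$ with ages $\mathbf{x}(t)=[x_1(t)\ \cdots\ x_n(t)]$; each age grows at unit rate between events. There are $n$ independent Poisson event processes with rates $\mu_0,\ldots,\mu_{n-1}$. At an event of process $0$ (a fresh update delivered to node 1), $x_1$ is reset to $0$ and all other ages are unchanged. At an event of process $l\in\{1,\ldots,n-1\}$ (node $l$ forwards its current update to node $l+1$), $x_{l+1}$ is reset to $x_l$ and all other ages are unchanged. (Equivalently, this is the age process of a line of preemptive memoryless $\cdot$/M/1/1 servers with service rates $\mu_1,\ldots,\mu_{n-1}$ fed by a rate-$\mu_0$ Poisson source of fresh updates.) *)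

theory Defs
  imports "HOL-Probability.Probability"
begin

text \<open>Sample paths: \<omega> (l, k) is the k-th inter-event time of Poisson process l
  (l = 0..n-1, k = 0,1,...). Nodes are indexed 0..n-1 (index j is node j+1).\<close>

definition event_time :: "(nat \<times> nat \<Rightarrow> real) \<Rightarrow> nat \<Rightarrow> nat \<Rightarrow> real" where
  "event_time \<omega> l k = (\<Sum>i\<le>k. \<omega> (l, i))"

definition num_events :: "(nat \<times> nat \<Rightarrow> real) \<Rightarrow> nat \<Rightarrow> real \<Rightarrow> nat" where
  "num_events \<omega> l t = card {k. event_time \<omega> l k \<le> t}"

definition last_event :: "(nat \<times> nat \<Rightarrow> real) \<Rightarrow> nat \<Rightarrow> real \<Rightarrow> real" where
  "last_event \<omega> l t = event_time \<omega> l (num_events \<omega> l t - 1)"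

text \<open>Age of node index j at time t, starting from initial ages x0.
  Process 0 resets node index 0 to age 0; process l+1 resets node index l+1
  to the current age of node index l.\<close>
fun age :: "(nat \<Rightarrow> real) \<Rightarrow> (nat \<times> nat \<Rightarrow> real) \<Rightarrow> nat \<Rightarrow> real \<Rightarrow> real" where
  "age x0 \<omega> 0 t =
     (if num_events \<omega> 0 t = 0 then x0 0 + t else t - last_event \<omega> 0 t)"
| "age x0 \<omega> (Suc j) t =
     (if num_events \<omega> (Suc j) t = 0 then x0 (Suc j) + t
      else age x0 \<omega> j (last_event \<omega> (Suc j) t) + (t - last_event \<omega> (Suc j) t))"

definition line_space :: "(nat \<Rightarrow> real) \<Rightarrow> nat \<Rightarrow> (nat \<times> nat \<Rightarrow> real) measure" where
  "line_space \<mu> n = PiM ({..<n} \<times> UNIV) (\<lambda>(l, k). density lborel (exponential_density (\<mu> l)))"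

definition Umat :: "(nat \<Rightarrow> real) \<Rightarrow> nat \<Rightarrow> nat \<Rightarrow> nat \<Rightarrow> real" where
  "Umat \<mu> n i j = (if i \<le> j \<and> j < n then 1 / \<mu> i else 0)"

definition mat_mult :: "nat \<Rightarrow> (nat \<Rightarrow> nat \<Rightarrow> real) \<Rightarrow> (nat \<Rightarrow> nat \<Rightarrow> real) \<Rightarrow> nat \<Rightarrow> nat \<Rightarrow> real" where
  "mat_mult n A B i j = (\<Sum>k<n. A i k * B k j)"

fun mat_pow :: "nat \<Rightarrow> (nat \<Rightarrow> nat \<Rightarrow> real) \<Rightarrow> nat \<Rightarrow> nat \<Rightarrow> nat \<Rightarrow> real" where
  "mat_pow n A 0 = (\<lambda>i j. if i = j then 1 else 0)"
| "mat_pow n A (Suc m) = mat_mult n (mat_pow n A m) A"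

end

theory Submission
  imports Defs "HOL-Real_Asymp.Real_Asymp"
begin

text \<open>Node \<open>j + 1\<close> copies the age of node \<open>j\<close> at each event of process \<open>j + 1\<close>, and the
  processes are independent. Let \<open>A\<close> be the time elapsed at \<open>t\<close> since the last such event: with
  probability \<open>exp (- \<mu>_{j+1} t)\<close> there was none yet, and otherwise \<open>A\<close> has density
  \<open>\<mu>_{j+1} exp (- \<mu>_{j+1} a)\<close> on \<open>[0, t]\<close>, independently of node \<open>j\<close>. Hence
  \<open>E x_{j+1}(t)^m = exp (- \<mu>_{j+1} t) (x_{j+1}(0) + t)^m + E[(x_j(t - A) + A)^m; A \<le> t]\<close>.
  Expanding binomially and letting \<open>t \<rightarrow> \<infinity>\<close> by dominated convergence, the limits \<open>c_j(m)\<close> of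
  \<open>E x_j(t)^m\<close> satisfy \<open>c_{j+1}(m) = \<Sum>_k (m choose k) c_j(k) (m - k)! / \<mu>_{j+1}^(m - k)\<close>,
  the recursion also satisfied by \<open>m!\<close> times the column sums of \<open>U^m\<close>.\<close>

section \<open>Sample paths\<close>

lemma suminf_indicator_nat: "(\<Sum>k. indicator A k :: ennreal) = emeasure (count_space UNIV) (A :: nat set)"
  by (simp add: nn_integral_count_space_nat[symmetric])

lemma real_num_events_eq_suminf:
  "real (num_events \<omega> l t) = enn2real (\<Sum>k. indicator {k. event_time \<omega> l k \<le> t} k :: ennreal)"
  unfolding num_events_def suminf_indicator_nat
  by (cases "finite {k. event_time \<omega> l k \<le> t}") (auto simp: emeasure_count_space)

lemma measurable_event_time[measurable]:
  assumes [measurable]: "\<And>k. (\<lambda>z. \<Omega> z (l, k)) \<in> borel_measurable N"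
  shows "(\<lambda>z. event_time (\<Omega> z) l k) \<in> borel_measurable N"
  unfolding event_time_def by measurable

lemma measurable_num_events:
  assumes [measurable]: "\<And>k. (\<lambda>z. \<Omega> z (l, k)) \<in> borel_measurable N" "T \<in> borel_measurable N"
  shows "(\<lambda>z. num_events (\<Omega> z) l (T z)) \<in> measurable N (count_space UNIV)"
  unfolding measurable_count_space_eq2_countable
proof safe
  fix a :: nat
  have [measurable]: "(\<lambda>z. real (num_events (\<Omega> z) l (T z))) \<in> borel_measurable N"
    unfolding real_num_events_eq_suminf by measurable
  have "(\<lambda>z. num_events (\<Omega> z) l (T z)) -` {a} \<inter> space N =
      {z\<in>space N. real (num_events (\<Omega> z) l (T z)) = real a}"
    by auto
  also have "\<dots> \<in> sets N" by measurable
  finally show "(\<lambda>z. num_events (\<Omega> z) l (T z)) -` {a} \<inter> space N \<in> sets N" .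
qed auto

lemma measurable_last_event:
  assumes [measurable]: "\<And>k. (\<lambda>z. \<Omega> z (l, k)) \<in> borel_measurable N" "T \<in> borel_measurable N"
  shows "(\<lambda>z. last_event (\<Omega> z) l (T z)) \<in> borel_measurable N"
  unfolding last_event_def
proof (rule measurable_compose_countable[where f="\<lambda>i z. event_time (\<Omega> z) l (i - 1)"])
  show "(\<lambda>z. num_events (\<Omega> z) l (T z)) \<in> N \<rightarrow>\<^sub>M count_space UNIV"
    by (rule measurable_num_events) (use assms in auto)
qed measurable

lemma measurable_age:
  assumes "\<And>l k. l \<le> j \<Longrightarrow> (\<lambda>z. \<Omega> z (l, k)) \<in> borel_measurable N" "T \<in> borel_measurable N"
  shows "(\<lambda>z. age x0 (\<Omega> z) j (T z)) \<in> borel_measurable N"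
  using assms
proof (induction j arbitrary: T)
  case 0
  note [measurable] = 0(1)[of 0, simplified] 0(2)
  have [measurable]: "(\<lambda>z. num_events (\<Omega> z) 0 (T z)) \<in> measurable N (count_space UNIV)"
    by (rule measurable_num_events) measurable
  have [measurable]: "(\<lambda>z. last_event (\<Omega> z) 0 (T z)) \<in> borel_measurable N"
    by (rule measurable_last_event) measurable
  show ?case by simp measurable
next
  case (Suc j)
  note [measurable] = Suc(2)[of "Suc j", simplified] Suc(3)
  have [measurable]: "(\<lambda>z. num_events (\<Omega> z) (Suc j) (T z)) \<in> measurable N (count_space UNIV)"
    by (rule measurable_num_events) measurable
  have [measurable]: "(\<lambda>z. last_event (\<Omega> z) (Suc j) (T z)) \<in> borel_measurable N"
    by (rule measurable_last_event) measurable
  have [measurable]: "(\<lambda>z. age x0 (\<Omega> z) j (last_event (\<Omega> z) (Suc j) (T z))) \<in> borel_measurable N"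
    by (rule Suc.IH) (use Suc.prems in auto)
  show ?case by simp measurable
qed

lemma num_events_cong: "(\<And>k. \<omega> (l, k) = \<omega>' (l', k)) \<Longrightarrow> num_events \<omega> l t = num_events \<omega>' l' t"
  unfolding num_events_def event_time_def by simp

lemma last_event_cong: "(\<And>k. \<omega> (l, k) = \<omega>' (l', k)) \<Longrightarrow> last_event \<omega> l t = last_event \<omega>' l' t"
  unfolding last_event_def using num_events_cong[of \<omega> l \<omega>' l' t] by (simp add: event_time_def)

lemma age_cong:
  assumes "\<And>l k. l \<le> j \<Longrightarrow> \<omega> (l, k) = \<omega>' (l, k)"
  shows "age x0 \<omega> j t = age x0 \<omega>' j t"
  using assms
proof (induction j arbitrary: t)
  case 0
  then show ?case using num_events_cong[of \<omega> 0 \<omega>' 0 t] last_event_cong[of \<omega> 0 \<omega>' 0 t] by simp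
next
  case (Suc j)
  have "age x0 \<omega> j s = age x0 \<omega>' j s" for s by (rule Suc.IH) (use Suc.prems in auto)
  then show ?case
    using num_events_cong[of \<omega> "Suc j" \<omega>' "Suc j" t] last_event_cong[of \<omega> "Suc j" \<omega>' "Suc j" t] Suc.prems
    by simp
qed

lemma event_time_mono:
  assumes "\<And>k. 0 \<le> \<omega> (l, k)" "k \<le> k'"
  shows "event_time \<omega> l k \<le> event_time \<omega> l k'"
  unfolding event_time_def using assms by (intro sum_mono2) auto

lemma event_time_nonneg: "(\<And>k. 0 \<le> \<omega> (l, k)) \<Longrightarrow> 0 \<le> event_time \<omega> l k"
  unfolding event_time_def by (simp add: sum_nonneg)

lemma events_le_eq_lessThan:
  assumes nonneg: "\<And>k. 0 \<le> \<omega> (l, k)" and fin: "finite {k. event_time \<omega> l k \<le> t}"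
  shows "{k. event_time \<omega> l k \<le> t} = {..<num_events \<omega> l t}"
proof (cases "{k. event_time \<omega> l k \<le> t} = {}")
  case False
  let ?S = "{k. event_time \<omega> l k \<le> t}"
  have "Max ?S \<in> ?S" using fin False by (rule Max_in)
  then have "?S = {..Max ?S}"
    using fin event_time_mono[of \<omega> l, OF nonneg] by (auto intro: order_trans)
  then show ?thesis unfolding num_events_def by (metis card_atMost lessThan_Suc_atMost)
qed (simp add: num_events_def)

lemma last_event_bounds:
  assumes nonneg: "\<And>k. 0 \<le> \<omega> (l, k)" and "num_events \<omega> l t \<noteq> 0"
  shows "0 \<le> last_event \<omega> l t" "last_event \<omega> l t \<le> t"
proof -
  have "finite {k. event_time \<omega> l k \<le> t}"
    using assms(2) card_ge_0_finite unfolding num_events_def by blast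
  then have "num_events \<omega> l t - 1 \<in> {k. event_time \<omega> l k \<le> t}"
    using assms(2) events_le_eq_lessThan[of \<omega> l t] nonneg by simp
  then show "0 \<le> last_event \<omega> l t" "last_event \<omega> l t \<le> t"
    using event_time_nonneg[of \<omega> l] nonneg by (simp_all add: last_event_def)
qed

lemma age_bounds:
  assumes "\<And>l k. l \<le> j \<Longrightarrow> 0 \<le> \<omega> (l, k)" "\<And>i. i \<le> j \<Longrightarrow> 0 \<le> x0 i" "0 \<le> t"
  shows "0 \<le> age x0 \<omega> j t \<and> age x0 \<omega> j t \<le> t + (\<Sum>i\<le>j. x0 i)"
  using assms
proof (induction j arbitrary: t)
  case 0
  then show ?case using last_event_bounds[of \<omega> 0 t] by auto
next
  case (Suc j)
  show ?case
  proof (cases "num_events \<omega> (Suc j) t = 0")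
    case True
    moreover have "0 \<le> sum x0 {..j}" using Suc.prems by (intro sum_nonneg) auto
    ultimately show ?thesis using Suc.prems by simp
  next
    case False
    let ?s = "last_event \<omega> (Suc j) t"
    have s: "0 \<le> ?s" "?s \<le> t" using last_event_bounds[of \<omega> "Suc j" t] False Suc.prems by auto
    have "0 \<le> age x0 \<omega> j ?s \<and> age x0 \<omega> j ?s \<le> ?s + (\<Sum>i\<le>j. x0 i)"
      by (rule Suc.IH) (use Suc.prems s in auto)
    then show ?thesis using False s Suc.prems(2)[of "Suc j"] by simp
  qed
qed

section \<open>Column sums of \<open>U^m\<close>\<close>

definition Upow_colsum :: "(nat \<Rightarrow> real) \<Rightarrow> nat \<Rightarrow> nat \<Rightarrow> nat \<Rightarrow> real" where
  "Upow_colsum \<mu> n m j = (\<Sum>i<n. mat_pow n (Umat \<mu> n) m i j)"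

lemma Upow_colsum_0: "j < n \<Longrightarrow> Upow_colsum \<mu> n 0 j = 1"
  unfolding Upow_colsum_def by (simp add: sum.delta)

lemma Upow_colsum_Suc:
  assumes "j < n"
  shows "Upow_colsum \<mu> n (Suc m) j = (\<Sum>k\<le>j. Upow_colsum \<mu> n m k / \<mu> k)"
proof -
  have "Upow_colsum \<mu> n (Suc m) j = (\<Sum>i<n. \<Sum>k<n. mat_pow n (Umat \<mu> n) m i k * Umat \<mu> n k j)"
    unfolding Upow_colsum_def by (simp add: mat_mult_def)
  also have "\<dots> = (\<Sum>k<n. Upow_colsum \<mu> n m k * Umat \<mu> n k j)"
    unfolding Upow_colsum_def by (subst sum.swap) (simp add: sum_distrib_right)
  also have "\<dots> = (\<Sum>k<n. if k \<le> j then Upow_colsum \<mu> n m k / \<mu> k else 0)"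
    using assms by (intro sum.cong) (auto simp: Umat_def)
  also have "\<dots> = (\<Sum>k\<in>{..<n} \<inter> {k. k \<le> j}. Upow_colsum \<mu> n m k / \<mu> k)"
    by (simp add: sum.inter_restrict)
  also have "{..<n} \<inter> {k. k \<le> j} = {..j}" using assms by auto
  finally show ?thesis .
qed

lemma Upow_colsum_first_column: "0 < n \<Longrightarrow> Upow_colsum \<mu> n m 0 = (1 / \<mu> 0) ^ m"
  by (induction m) (simp_all add: Upow_colsum_0 Upow_colsum_Suc)

lemma Upow_colsum_Suc_column:
  assumes "Suc j < n"
  shows "Upow_colsum \<mu> n m (Suc j) = (\<Sum>k\<le>m. (1 / \<mu> (Suc j)) ^ (m - k) * Upow_colsum \<mu> n k j)"
proof (induction m)
  case 0
  then show ?case using assms by (simp add: Upow_colsum_0)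
next
  case (Suc m)
  have "Upow_colsum \<mu> n (Suc m) (Suc j) = Upow_colsum \<mu> n (Suc m) j + Upow_colsum \<mu> n m (Suc j) / \<mu> (Suc j)"
    using assms by (simp add: Upow_colsum_Suc)
  also have "\<dots> = Upow_colsum \<mu> n (Suc m) j + (\<Sum>k\<le>m. (1 / \<mu> (Suc j)) ^ (Suc m - k) * Upow_colsum \<mu> n k j)"
    unfolding Suc by (simp add: sum_divide_distrib Suc_diff_le field_simps)
  also have "\<dots> = (\<Sum>k\<le>Suc m. (1 / \<mu> (Suc j)) ^ (Suc m - k) * Upow_colsum \<mu> n k j)"
    by simp
  finally show ?case .
qed

lemma binomial_factorial_sum:
  fixes c :: "nat \<Rightarrow> real"
  shows "(\<Sum>k\<le>m. of_nat (m choose k) * ((fact k * c k) * (fact (m - k) / \<mu> ^ (m - k)))) =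
    fact m * (\<Sum>k\<le>m. (1 / \<mu>) ^ (m - k) * c k)"
proof -
  have "of_nat (m choose k) * ((fact k * c k) * (fact (m - k) / \<mu> ^ (m - k))) =
      fact m * ((1 / \<mu>) ^ (m - k) * c k)" if "k \<le> m" for k
  proof -
    have "fact k * fact (m - k) * real (m choose k) = (fact m :: real)"
      using binomial_fact_lemma[OF that] by (metis of_nat_fact of_nat_mult)
    then show ?thesis by (simp add: power_one_over field_simps)
  qed
  then show ?thesis by (simp add: sum_distrib_left)
qed

section \<open>Exponential convolutions\<close>

lemma exponential_density_mult_power_nonneg: "0 < \<mu> \<Longrightarrow> 0 \<le> exponential_density \<mu> a * a ^ p"
  by (auto simp: erlang_density_def)

lemma integrable_exponential_moment:
    "0 < \<mu> \<Longrightarrow> integrable lborel (\<lambda>a. exponential_density \<mu> a * a ^ p)"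
  and exponential_moment: "0 < \<mu> \<Longrightarrow> (\<integral>a. exponential_density \<mu> a * a ^ p \<partial>lborel) = fact p / \<mu> ^ p"
proof -
  assume \<mu>: "0 < \<mu>"
  have nn: "(\<integral>\<^sup>+ x. ennreal (exponential_density \<mu> x * x ^ p) \<partial>lborel) = fact p / \<mu> ^ p"
    using nn_integral_erlang_ith_moment[OF \<mu>, of 0 p] by simp
  show int: "integrable lborel (\<lambda>a. exponential_density \<mu> a * a ^ p)"
    using nn \<mu> exponential_density_mult_power_nonneg by (intro integrableI_nonneg) auto
  have "ennreal (\<integral>a. exponential_density \<mu> a * a ^ p \<partial>lborel) = fact p / \<mu> ^ p"
    using nn_integral_eq_integral[OF int] nn \<mu> exponential_density_mult_power_nonneg by simp
  then show "(\<integral>a. exponential_density \<mu> a * a ^ p \<partial>lborel) = fact p / \<mu> ^ p"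
    using \<mu> by (subst (asm) ennreal_inj) (auto intro!: integral_nonneg_AE exponential_density_mult_power_nonneg)
qed

text \<open>\<open>exp_conv \<mu> p \<Phi> t\<close> is \<open>E[A^p \<Phi>(t - A); A \<le> t]\<close> for an exponential(\<open>\<mu>\<close>) variable \<open>A\<close>.\<close>

definition exp_conv :: "real \<Rightarrow> nat \<Rightarrow> (real \<Rightarrow> real) \<Rightarrow> real \<Rightarrow> real" where
  "exp_conv \<mu> p \<Phi> t = (\<integral>a. indicator {..t} a * (exponential_density \<mu> a * a ^ p) * \<Phi> (t - a) \<partial>lborel)"

lemma exp_conv_integrand_bound:
  assumes \<mu>: "0 < \<mu>" and "0 \<le> B" and B: "\<And>s. 0 \<le> s \<Longrightarrow> s \<le> t \<Longrightarrow> \<bar>\<Phi> s\<bar> \<le> B"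
  shows "norm (indicator {..t} a * (exponential_density \<mu> a * a ^ p) * \<Phi> (t - a))
    \<le> B * (exponential_density \<mu> a * a ^ p)"
proof (cases "0 \<le> a \<and> a \<le> t")
  case True
  then have "\<bar>\<Phi> (t - a)\<bar> \<le> B" by (intro B) simp_all
  then show ?thesis
    using True exponential_density_mult_power_nonneg[OF \<mu>, of a p]
    by (simp add: abs_mult abs_of_nonneg[OF exponential_density_nonneg[OF \<mu>]])
       (metis mult.commute mult_left_mono)
next
  case False
  then show ?thesis
    using \<open>0 \<le> B\<close> exponential_density_mult_power_nonneg[OF \<mu>, of a p] by (auto simp: erlang_density_def)
qed

lemma integrable_exp_conv:
  assumes \<mu>: "0 < \<mu>" and [measurable]: "\<Phi> \<in> borel_measurable borel"
    and "0 \<le> B" and B: "\<And>s. 0 \<le> s \<Longrightarrow> s \<le> t \<Longrightarrow> \<bar>\<Phi> s\<bar> \<le> B"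
  shows "integrable lborel (\<lambda>a. indicator {..t} a * (exponential_density \<mu> a * a ^ p) * \<Phi> (t - a))"
proof (rule Bochner_Integration.integrable_bound)
  show "integrable lborel (\<lambda>a. B * (exponential_density \<mu> a * a ^ p))"
    using integrable_exponential_moment[OF \<mu>] by simp
  show "AE a in lborel. norm (indicator {..t} a * (exponential_density \<mu> a * a ^ p) * \<Phi> (t - a))
      \<le> norm (B * (exponential_density \<mu> a * a ^ p))"
  proof (rule AE_I2)
    fix a
    show "norm (indicator {..t} a * (exponential_density \<mu> a * a ^ p) * \<Phi> (t - a))
      \<le> norm (B * (exponential_density \<mu> a * a ^ p))"
      using exp_conv_integrand_bound[of \<mu> B t \<Phi> a p, OF \<mu> \<open>0 \<le> B\<close> B]
      by (metis abs_ge_self order_trans real_norm_def)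
  qed
qed measurable

lemma tendsto_exp_conv:
  assumes \<mu>: "0 < \<mu>" and [measurable]: "\<Phi> \<in> borel_measurable borel"
    and B: "\<And>s. 0 \<le> s \<Longrightarrow> \<bar>\<Phi> s\<bar> \<le> B" and lim: "(\<Phi> \<longlongrightarrow> D) at_top"
  shows "(exp_conv \<mu> p \<Phi> \<longlongrightarrow> D * (fact p / \<mu> ^ p)) at_top"
proof -
  have "0 \<le> B" using B[of 0] by simp
  have "((\<lambda>t. \<integral>a. indicator {..t} a * (exponential_density \<mu> a * a ^ p) * \<Phi> (t - a) \<partial>lborel)
      \<longlongrightarrow> (\<integral>a. (exponential_density \<mu> a * a ^ p) * D \<partial>lborel)) at_top"
  proof (rule integral_dominated_convergence_at_top[where w="\<lambda>a. B * (exponential_density \<mu> a * a ^ p)"])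
    show "integrable lborel (\<lambda>a. B * (exponential_density \<mu> a * a ^ p))"
      using integrable_exponential_moment[OF \<mu>] by simp
    show "AE a in lborel. ((\<lambda>t. indicator {..t} a * (exponential_density \<mu> a * a ^ p) * \<Phi> (t - a))
       \<longlongrightarrow> exponential_density \<mu> a * a ^ p * D) at_top"
    proof (rule AE_I2, rule Lim_transform_eventually)
      fix a :: real
      have "filterlim (\<lambda>t. t - a) at_top at_top"
        by real_asymp
      then show "((\<lambda>t. (exponential_density \<mu> a * a ^ p) * \<Phi> (t - a))
          \<longlongrightarrow> exponential_density \<mu> a * a ^ p * D) at_top"
        by (intro tendsto_mult tendsto_const filterlim_compose[OF lim])
      show "\<forall>\<^sub>F t in at_top. exponential_density \<mu> a * a ^ p * \<Phi> (t - a) =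
          indicator {..t} a * (exponential_density \<mu> a * a ^ p) * \<Phi> (t - a)"
        using eventually_ge_at_top[of a] by eventually_elim simp
    qed
    show "\<forall>\<^sub>F t in at_top. AE a in lborel.
        norm (indicator {..t} a * (exponential_density \<mu> a * a ^ p) * \<Phi> (t - a))
          \<le> B * (exponential_density \<mu> a * a ^ p)"
      by (intro always_eventually allI AE_I2 exp_conv_integrand_bound[OF \<mu> \<open>0 \<le> B\<close>] B)
  qed measurable
  also have "(\<integral>a. (exponential_density \<mu> a * a ^ p) * D \<partial>lborel) = D * (fact p / \<mu> ^ p)"
    using exponential_moment[OF \<mu>, of p] by simp
  finally show ?thesis unfolding exp_conv_def .
qed

lemma tendsto_exp_mult_power:
  fixes \<mu> c :: real assumes "0 < \<mu>"
  shows "((\<lambda>t. exp (- \<mu> * t) * (c + t) ^ m) \<longlongrightarrow> 0) at_top"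
  using assms by real_asymp

lemma bounded_nonneg_if_tendsto:
  fixes f :: "real \<Rightarrow> real"
  assumes lim: "(f \<longlongrightarrow> D) at_top" and b: "\<And>s. 0 \<le> s \<Longrightarrow> \<bar>f s\<bar> \<le> (s + C) ^ k" and C: "0 \<le> C"
  shows "\<exists>B. \<forall>s\<ge>0. \<bar>f s\<bar> \<le> B"
proof -
  have "\<forall>\<^sub>F s in at_top. dist (f s) D < 1" using lim by (rule tendstoD) simp
  then obtain T where T: "\<And>s. s \<ge> T \<Longrightarrow> dist (f s) D < 1" by (auto simp: eventually_at_top_linorder)
  have "\<bar>f s\<bar> \<le> max (\<bar>D\<bar> + 1) ((\<bar>T\<bar> + C) ^ k)" if s: "0 \<le> s" for s
  proof (cases "s \<ge> T")
    case True
    then show ?thesis using T[OF True] by (auto simp: dist_real_def)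
  next
    case False
    have "\<bar>f s\<bar> \<le> (s + C) ^ k" by (rule b[OF s])
    also have "\<dots> \<le> (\<bar>T\<bar> + C) ^ k" using False s C by (intro power_mono) auto
    finally show ?thesis by simp
  qed
  then show ?thesis by blast
qed

section \<open>Renewal with i.i.d. exponential gaps\<close>

definition arrival :: "nat \<Rightarrow> (nat \<Rightarrow> real) \<Rightarrow> real" where
  "arrival k x = (\<Sum>i\<le>k. x i)"

definition gaps_path :: "(nat \<Rightarrow> real) \<Rightarrow> nat \<times> nat \<Rightarrow> real" where
  "gaps_path x = (\<lambda>(_, k). x k)"

lemma gaps_path_apply[simp]: "gaps_path x (l, k) = x k"
  by (simp add: gaps_path_def)

lemma arrival_0: "arrival 0 x = x 0"
  by (simp add: arrival_def)

lemma arrival_Suc: "arrival (Suc k) x = arrival k x + x (Suc k)"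
  by (simp add: arrival_def)

lemma event_time_gaps_path: "event_time (gaps_path x) l k = arrival k x"
  by (simp add: event_time_def arrival_def)

lemma last_event_decompose:
  assumes nonneg: "\<And>i. 0 \<le> x i" and fin: "finite {k. arrival k x \<le> t}"
  shows "(if num_events (gaps_path x) 0 t = 0 then c else h (t - last_event (gaps_path x) 0 t)) =
    (if t < x 0 then c else 0) +
    (\<Sum>k. if arrival k x \<le> t \<and> t < arrival (Suc k) x then h (t - arrival k x) else (0::ennreal))"
proof -
  let ?N = "num_events (gaps_path x) 0 t"
  have S: "{k. arrival k x \<le> t} = {..<?N}"
    using events_le_eq_lessThan[of "gaps_path x" 0 t] nonneg fin by (simp add: event_time_gaps_path)
  have arrived: "arrival k x \<le> t \<longleftrightarrow> k < ?N" for k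
    using S by blast
  have between: "(arrival k x \<le> t \<and> t < arrival (Suc k) x) \<longleftrightarrow> Suc k = ?N" for k
    using arrived[of k] arrived[of "Suc k"] by (auto simp: not_le[symmetric])
  show ?thesis
  proof (cases "?N = 0")
    case True
    then have "(\<Sum>k. if arrival k x \<le> t \<and> t < arrival (Suc k) x then h (t - arrival k x) else (0::ennreal)) = 0"
      by (simp add: between)
    then show ?thesis using True arrived[of 0] by (simp add: arrival_0 not_le)
  next
    case False
    have "(\<Sum>k. if arrival k x \<le> t \<and> t < arrival (Suc k) x then h (t - arrival k x) else (0::ennreal)) =
        (\<Sum>k. if k = ?N - 1 then h (t - arrival (?N - 1) x) else 0)"
      using False by (intro suminf_cong) (auto simp: between)
    also have "\<dots> = h (t - arrival (?N - 1) x)"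
      by (subst suminf_finite[of "{?N - 1}"]) auto
    finally show ?thesis
      using False arrived[of 0] by (auto simp: arrival_0 last_event_def event_time_gaps_path)
  qed
qed

lemma suminf_erlang_density:
  assumes "0 < \<mu>"
  shows "(\<Sum>k. ennreal (erlang_density k \<mu> s)) = ennreal (if s < 0 then 0 else \<mu>)"
proof (cases "s < 0")
  case True then show ?thesis by (simp add: erlang_density_def)
next
  case False
  have "(\<lambda>k. (\<mu> * exp (- \<mu> * s)) * ((\<mu> * s) ^ k /\<^sub>R fact k)) sums ((\<mu> * exp (- \<mu> * s)) * exp (\<mu> * s))"
    by (intro sums_mult exp_converges)
  also have "(\<mu> * exp (- \<mu> * s)) * exp (\<mu> * s) = \<mu>" by (simp add: exp_minus field_simps)
  also have "(\<lambda>k. (\<mu> * exp (- \<mu> * s)) * ((\<mu> * s) ^ k /\<^sub>R fact k)) = (\<lambda>k. erlang_density k \<mu> s)"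
    using False by (auto simp: erlang_density_def fun_eq_iff field_simps power_mult_distrib)
  finally have "(\<lambda>k. erlang_density k \<mu> s) sums \<mu>" .
  then show ?thesis using False assms
    by (subst suminf_ennreal2) (auto simp: sums_iff intro: erlang_density_nonneg less_imp_le)
qed

lemma nn_integral_exponential_tail:
  assumes "0 < \<mu>" "0 \<le> a"
  shows "(\<integral>\<^sup>+y. ennreal (exponential_density \<mu> y) * indicator {a<..} y \<partial>lborel) = ennreal (exp (- \<mu> * a))"
proof -
  let ?M = "density lborel (exponential_density \<mu>)"
  interpret prob_space ?M using assms(1) by (rule prob_space_exponential_density)
  have "distributed ?M lborel (\<lambda>x. x) (exponential_density \<mu>)"
    unfolding distributed_def by (auto simp: distr_id2)
  then have "prob {x \<in> space ?M. a < x} = exp (- a * \<mu>)"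
    using assms by (intro exponential_distributedD_gt)
  then show ?thesis
    by (simp add: emeasure_density[symmetric] emeasure_eq_measure greaterThan_def mult.commute)
qed

locale iid_exponential =
  fixes \<mu> :: real
  assumes \<mu>: "0 < \<mu>"
begin

abbreviation "Gap \<equiv> density lborel (exponential_density \<mu>)"
abbreviation "Gaps \<equiv> PiM (UNIV :: nat set) (\<lambda>_. Gap)"

lemma prob_space_Gap: "prob_space Gap"
  using prob_space_exponential_density[OF \<mu>] .

sublocale Gaps: prob_space Gaps
  by (intro prob_space_PiM prob_space_Gap)

lemma measurable_Gaps_component[measurable]: "(\<lambda>x. x k) \<in> borel_measurable Gaps"
  using measurable_component_singleton[of k UNIV "\<lambda>_. Gap"] measurable_cong_sets by fastforce

lemma measurable_arrival[measurable]: "arrival k \<in> borel_measurable Gaps"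
  unfolding arrival_def by measurable

lemma distr_Gaps_component: "distr Gaps borel (\<lambda>x. x i) = Gap"
proof -
  have "distr Gaps borel (\<lambda>x. x i) = distr Gaps Gap (\<lambda>x. x i)"
    by (rule distr_cong) auto
  also have "\<dots> = Gap" by (rule distr_PiM_component) (auto intro: prob_space_Gap)
  finally show ?thesis .
qed

lemma distributed_Gaps_component: "distributed Gaps lborel (\<lambda>x. x i) (exponential_density \<mu>)"
proof -
  have "distr Gaps lborel (\<lambda>x. x i) = distr Gaps borel (\<lambda>x. x i)"
    by (rule distr_cong) auto
  then show ?thesis using distr_Gaps_component[of i] unfolding distributed_def by simp
qed

lemma indep_Gaps_components: "Gaps.indep_vars (\<lambda>_. borel) (\<lambda>i x. x i) UNIV"
proof (subst Gaps.indep_vars_iff_distr_eq_PiM)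
  have "distr Gaps (PiM UNIV (\<lambda>_. borel)) (\<lambda>x. \<lambda>i\<in>UNIV. x i) = Gaps"
    by (simp add: restrict_UNIV, rule distr_id2) (intro sets_PiM_cong, auto)
  also have "\<dots> = PiM UNIV (\<lambda>i. distr Gaps borel (\<lambda>x. x i))"
    by (intro PiM_cong) (auto simp: distr_Gaps_component)
  finally show "distr Gaps (PiM UNIV (\<lambda>_. borel)) (\<lambda>x. \<lambda>i\<in>UNIV. x i) =
      PiM UNIV (\<lambda>i. distr Gaps borel (\<lambda>x. x i))" .
qed auto

lemma distributed_arrival: "distributed Gaps lborel (arrival k) (erlang_density k \<mu>)"
proof -
  have "distributed Gaps lborel (\<lambda>x. \<Sum>i\<in>{..k}. x i) (erlang_density (card {..k} - 1) \<mu>)"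
    by (rule Gaps.exponential_distributed_sum[OF _ _ \<mu> distributed_Gaps_component])
       (auto intro: Gaps.indep_vars_subset[OF indep_Gaps_components])
  then show ?thesis by (simp add: arrival_def[abs_def])
qed

lemma AE_Gaps_nonneg: "AE x in Gaps. \<forall>i. 0 \<le> x i"
proof -
  interpret Gap: prob_space Gap by (rule prob_space_Gap)
  interpret product_prob_space "\<lambda>_::nat. Gap" UNIV by unfold_locales
  have "AE y in Gap. 0 \<le> y"
    by (subst AE_density) (auto simp: erlang_density_def)
  then have "\<And>i. AE x in Gaps. 0 \<le> x i" by (intro AE_component) auto
  then show ?thesis by (simp add: AE_all_countable)
qed

lemma AE_finite_arrivals: "AE x in Gaps. finite {k. arrival k x \<le> t}"
proof -
  have "(\<integral>\<^sup>+x. (\<Sum>k. indicator {..t} (arrival k x)) \<partial>Gaps) =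
      (\<Sum>k. \<integral>\<^sup>+s. ennreal (erlang_density k \<mu> s) * indicator {..t} s \<partial>lborel)"
    by (subst nn_integral_suminf) (auto simp: distributed_nn_integral[OF distributed_arrival])
  also have "\<dots> = (\<integral>\<^sup>+s. ennreal \<mu> * indicator {0..t} s \<partial>lborel)"
    by (subst nn_integral_suminf[symmetric])
       (auto simp: suminf_erlang_density[OF \<mu>] intro!: nn_integral_cong split: split_indicator)
  also have "\<dots> < \<infinity>"
    by (subst nn_integral_cmult) (auto simp: ennreal_mult_less_top emeasure_lborel_Icc_eq)
  finally have "AE x in Gaps. (\<Sum>k. indicator {..t} (arrival k x) :: ennreal) \<noteq> \<infinity>"
    by (intro nn_integral_PInf_AE) auto
  moreover have "(\<Sum>k. indicator {..t} (arrival k x) :: ennreal) = emeasure (count_space UNIV) {k. arrival k x \<le> t}" for x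
    by (subst suminf_indicator_nat[symmetric]) (auto intro!: suminf_cong split: split_indicator)
  ultimately show ?thesis
    by (auto elim!: eventually_mono simp: emeasure_count_space split: if_splits)
qed

lemma nn_integral_no_arrival:
  assumes "0 \<le> t"
  shows "(\<integral>\<^sup>+x. (if t < x 0 then c else 0) \<partial>Gaps) = ennreal (exp (- \<mu> * t)) * c"
proof -
  have "(\<integral>\<^sup>+x. (if t < x 0 then c else 0) \<partial>Gaps) =
      (\<integral>\<^sup>+y. (ennreal (exponential_density \<mu> y) * indicator {t<..} y) * c \<partial>lborel)"
    by (subst distributed_nn_integral[OF distributed_Gaps_component, symmetric])
       (auto intro!: nn_integral_cong split: split_indicator)
  also have "\<dots> = ennreal (exp (- \<mu> * t)) * c"
    by (subst nn_integral_multc) (auto simp: nn_integral_exponential_tail[OF \<mu> assms])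
  finally show ?thesis .
qed

lemma nn_integral_arrival_gap:
  assumes [measurable]: "g \<in> borel_measurable (borel \<Otimes>\<^sub>M borel)"
  shows "(\<integral>\<^sup>+x. g (x (Suc k), arrival k x) \<partial>Gaps) =
    (\<integral>\<^sup>+s. ennreal (erlang_density k \<mu> s) * (\<integral>\<^sup>+y. ennreal (exponential_density \<mu> y) * g (y, s) \<partial>lborel) \<partial>lborel)"
proof -
  let ?Er = "density lborel (erlang_density k \<mu>)"
  interpret Er: prob_space ?Er by (rule prob_space_erlang_density[OF \<mu>])
  interpret Gap: prob_space Gap by (rule prob_space_Gap)
  interpret pair_sigma_finite Gap ?Er ..
  have "Gaps.indep_var borel (\<lambda>x. x (Suc k)) borel (arrival k)"
    unfolding arrival_def[abs_def]
    by (rule Gaps.indep_vars_sum) (auto intro: Gaps.indep_vars_subset[OF indep_Gaps_components])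
  then have "distr Gaps (borel \<Otimes>\<^sub>M borel) (\<lambda>x. (x (Suc k), arrival k x)) =
      distr Gaps borel (\<lambda>x. x (Suc k)) \<Otimes>\<^sub>M distr Gaps borel (arrival k)"
    unfolding Gaps.indep_var_distribution_eq by simp
  also have "distr Gaps borel (arrival k) = distr Gaps lborel (arrival k)"
    by (rule distr_cong) auto
  also have "\<dots> = ?Er"
    using distributed_arrival[of k] unfolding distributed_def by simp
  finally have joint: "distr Gaps (borel \<Otimes>\<^sub>M borel) (\<lambda>x. (x (Suc k), arrival k x)) = Gap \<Otimes>\<^sub>M ?Er"
    by (simp add: distr_Gaps_component)
  have "(\<integral>\<^sup>+x. g (x (Suc k), arrival k x) \<partial>Gaps) = (\<integral>\<^sup>+p. g p \<partial>(Gap \<Otimes>\<^sub>M ?Er))"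
    by (subst joint[symmetric], subst nn_integral_distr) auto
  also have "\<dots> = (\<integral>\<^sup>+s. (\<integral>\<^sup>+y. g (y, s) \<partial>Gap) \<partial>?Er)"
    by (subst nn_integral_snd[symmetric]) auto
  finally show ?thesis
    by (simp add: nn_integral_density)
qed

lemma measurable_num_events_gaps_path[measurable]:
  "(\<lambda>x. num_events (gaps_path x) l t) \<in> measurable Gaps (count_space UNIV)"
  by (rule measurable_num_events) simp_all

lemma measurable_last_event_gaps_path[measurable]:
  "(\<lambda>x. last_event (gaps_path x) l t) \<in> borel_measurable Gaps"
  by (rule measurable_last_event) simp_all

lemma nn_integral_between_arrivals:
  assumes [measurable]: "h \<in> borel_measurable borel"
  shows "(\<integral>\<^sup>+x. (if arrival k x \<le> t \<and> t < arrival (Suc k) x then h (t - arrival k x) else 0) \<partial>Gaps) =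
    (\<integral>\<^sup>+s. ennreal (erlang_density k \<mu> s) *
      (if s \<le> t then ennreal (exp (- \<mu> * (t - s))) * h (t - s) else 0) \<partial>lborel)"
proof -
  define g where "g = (\<lambda>(y, s). if s \<le> t \<and> t < s + y then h (t - s) else 0)"
  have [measurable]: "g \<in> borel_measurable (borel \<Otimes>\<^sub>M borel)" unfolding g_def by measurable
  have "(\<integral>\<^sup>+y. ennreal (exponential_density \<mu> y) * g (y, s) \<partial>lborel) =
      (if s \<le> t then ennreal (exp (- \<mu> * (t - s))) * h (t - s) else 0)" for s
  proof (cases "s \<le> t")
    case True
    have "(\<integral>\<^sup>+y. ennreal (exponential_density \<mu> y) * g (y, s) \<partial>lborel) =
        (\<integral>\<^sup>+y. (ennreal (exponential_density \<mu> y) * indicator {t - s<..} y) * h (t - s) \<partial>lborel)"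
      using True by (intro nn_integral_cong) (auto simp: g_def split: split_indicator)
    also have "\<dots> = ennreal (exp (- \<mu> * (t - s))) * h (t - s)"
      using True by (subst nn_integral_multc) (auto simp: nn_integral_exponential_tail[OF \<mu>])
    finally show ?thesis using True by simp
  qed (simp add: g_def)
  moreover have "(\<integral>\<^sup>+x. (if arrival k x \<le> t \<and> t < arrival (Suc k) x then h (t - arrival k x) else 0) \<partial>Gaps) =
      (\<integral>\<^sup>+x. g (x (Suc k), arrival k x) \<partial>Gaps)"
    by (simp add: g_def arrival_Suc)
  ultimately show ?thesis by (simp add: nn_integral_arrival_gap)
qed

text \<open>The renewal argument: conditioning on the last arrival before \<open>t\<close>, the density of the
  age \<open>t - last_event\<close> is \<open>\<Sum>\<^sub>k erlang_density k \<mu> (t - a) exp (- \<mu> a) = \<mu> exp (- \<mu> a)\<close> on \<open>[0, t]\<close>.\<close>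

lemma nn_integral_last_event:
  assumes t: "0 \<le> t" and [measurable]: "h \<in> borel_measurable borel"
  shows "(\<integral>\<^sup>+x. (if num_events (gaps_path x) 0 t = 0 then c else h (t - last_event (gaps_path x) 0 t)) \<partial>Gaps)
    = ennreal (exp (- \<mu> * t)) * c + (\<integral>\<^sup>+a. ennreal (indicator {..t} a * exponential_density \<mu> a) * h a \<partial>lborel)"
proof -
  define \<phi> where "\<phi> s = (if s \<le> t then ennreal (exp (- \<mu> * (t - s))) * h (t - s) else 0)" for s
  have [measurable]: "\<phi> \<in> borel_measurable borel" unfolding \<phi>_def by measurable
  have "(\<integral>\<^sup>+x. (if num_events (gaps_path x) 0 t = 0 then c else h (t - last_event (gaps_path x) 0 t)) \<partial>Gaps)
     = (\<integral>\<^sup>+x. (if t < x 0 then c else 0) +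
          (\<Sum>k. if arrival k x \<le> t \<and> t < arrival (Suc k) x then h (t - arrival k x) else 0) \<partial>Gaps)"
    by (intro nn_integral_cong_AE, use AE_Gaps_nonneg AE_finite_arrivals[of t] in eventually_elim)
       (rule last_event_decompose; auto)
  also have "\<dots> = ennreal (exp (- \<mu> * t)) * c + (\<Sum>k. \<integral>\<^sup>+s. ennreal (erlang_density k \<mu> s) * \<phi> s \<partial>lborel)"
    by (simp add: nn_integral_add nn_integral_suminf nn_integral_no_arrival[OF t]
        nn_integral_between_arrivals \<phi>_def)
  also have "(\<Sum>k. \<integral>\<^sup>+s. ennreal (erlang_density k \<mu> s) * \<phi> s \<partial>lborel) =
      (\<integral>\<^sup>+s. ennreal (if s < 0 then 0 else \<mu>) * \<phi> s \<partial>lborel)"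
    by (subst nn_integral_suminf[symmetric]) (auto simp: suminf_erlang_density[OF \<mu>])
  also have "\<dots> = (\<integral>\<^sup>+a. ennreal (if t - a < 0 then 0 else \<mu>) * \<phi> (t - a) \<partial>lborel)"
    by (subst nn_integral_real_affine[where c="-1" and t=t]) auto
  also have "\<dots> = (\<integral>\<^sup>+a. ennreal (indicator {..t} a * exponential_density \<mu> a) * h a \<partial>lborel)"
    using \<mu> by (intro nn_integral_cong)
      (auto simp: \<phi>_def erlang_density_def ennreal_mult' mult.commute[of "exp _"] mult.assoc split: split_indicator)
  finally show ?thesis .
qed

end

section \<open>The line network\<close>

lemma distr_PiM_restrict:
  assumes "\<And>i. i \<in> I \<Longrightarrow> prob_space (M i)" "A \<subseteq> I"
  shows "distr (PiM I M) (PiM A M) (\<lambda>\<omega>. restrict \<omega> A) = PiM A M"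
  using distr_PiM_reindex[of I M id A] assms by (auto simp: restrict_def Pi_iff)

lemma distr_PiM_restrict_pair:
  assumes M: "\<And>i. i \<in> I \<Longrightarrow> prob_space (M i)" and I: "I \<noteq> {}"
    and AB: "A \<subseteq> I" "B \<subseteq> I" "A \<inter> B = {}"
  shows "distr (PiM I M) (PiM A M \<Otimes>\<^sub>M PiM B M) (\<lambda>\<omega>. (restrict \<omega> A, restrict \<omega> B)) = PiM A M \<Otimes>\<^sub>M PiM B M"
proof -
  interpret P: prob_space "PiM I M" by (intro prob_space_PiM M)
  have "P.indep_vars M (\<lambda>i \<omega>. \<omega> i) I"
  proof (subst P.indep_vars_iff_distr_eq_PiM')
    have "distr (PiM I M) (PiM I M) (\<lambda>x. \<lambda>i\<in>I. x i) = distr (PiM I M) (PiM I M) (\<lambda>x. x)"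
      by (rule distr_cong) (auto simp: space_PiM PiE_def extensional_restrict)
    also have "\<dots> = PiM I (\<lambda>i. distr (PiM I M) (M i) (\<lambda>\<omega>. \<omega> i))"
      by (simp add: distr_id2) (intro PiM_cong refl distr_PiM_component[symmetric] M, auto)
    finally show "distr (PiM I M) (PiM I M) (\<lambda>x. \<lambda>i\<in>I. x i) = PiM I (\<lambda>i. distr (PiM I M) (M i) (\<lambda>\<omega>. \<omega> i))" .
  qed (use I in auto)
  then have "P.indep_var (PiM A M) (\<lambda>\<omega>. restrict \<omega> A) (PiM B M) (\<lambda>\<omega>. restrict \<omega> B)"
    using P.indep_var_restrict[of M "\<lambda>i \<omega>. \<omega> i" I A B] AB by simp
  moreover have "distr (PiM I M) (PiM A M) (\<lambda>\<omega>. restrict \<omega> A) = PiM A M"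
    "distr (PiM I M) (PiM B M) (\<lambda>\<omega>. restrict \<omega> B) = PiM B M"
    using distr_PiM_restrict[of I M A, OF M AB(1)] distr_PiM_restrict[of I M B, OF M AB(2)] by simp_all
  ultimately show ?thesis unfolding P.indep_var_distribution_eq by simp
qed

lemma distr_PiM_row:
  assumes "\<And>i. i \<in> K \<Longrightarrow> prob_space (M i)" "{l} \<times> UNIV \<subseteq> K"
  shows "distr (PiM K M) (PiM UNIV (\<lambda>k. M (l, k))) (\<lambda>\<omega> k. \<omega> (l, k)) = PiM UNIV (\<lambda>k. M (l, k))"
  using distr_PiM_reindex[of K M "Pair l" UNIV] assms by (auto simp: restrict_UNIV inj_on_def)

lemma measurable_PiM_coordinate:
  assumes "i \<in> K" "sets (M i) = sets borel"
  shows "(\<lambda>\<omega>. \<omega> i) \<in> borel_measurable (PiM K M)"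
  using measurable_component_singleton[of i K M] assms measurable_cong_sets by blast

lemma ennreal_exp_add_integral_eqD:
  assumes eq: "ennreal X = ennreal c * ennreal Y + (\<integral>\<^sup>+a. ennreal (\<psi> a) \<partial>lborel)"
    and "integrable lborel \<psi>" "\<And>a. 0 \<le> \<psi> a" "0 \<le> X" "0 \<le> c" "0 \<le> Y"
  shows "X = c * Y + (\<integral>a. \<psi> a \<partial>lborel)"
proof -
  have "ennreal X = ennreal (c * Y + (\<integral>a. \<psi> a \<partial>lborel))"
    using assms by (simp add: nn_integral_eq_integral ennreal_mult ennreal_plus integral_nonneg_AE)
  then show ?thesis
    using assms by (subst (asm) ennreal_inj) (auto intro!: add_nonneg_nonneg integral_nonneg_AE)
qed

locale line =
  fixes \<mu> :: "nat \<Rightarrow> real" and n :: nat and x0 :: "nat \<Rightarrow> real"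
  assumes \<mu>_pos: "\<And>l. l < n \<Longrightarrow> 0 < \<mu> l" and x0_nonneg: "\<And>j. j < n \<Longrightarrow> 0 \<le> x0 j"
begin

abbreviation "Gap_at \<equiv> (\<lambda>(l, k). density lborel (exponential_density (\<mu> l))) :: nat \<times> nat \<Rightarrow> real measure"
abbreviation "Idx \<equiv> {..<n} \<times> (UNIV :: nat set)"
abbreviation "P \<equiv> line_space \<mu> n"

lemma P_eq: "P = PiM Idx Gap_at"
  by (simp add: line_space_def)

lemma prob_space_Gap_at: "i \<in> Idx \<Longrightarrow> prob_space (Gap_at i)"
  by (auto intro!: prob_space_exponential_density \<mu>_pos)

sublocale P: prob_space P
  unfolding P_eq by (intro prob_space_PiM prob_space_Gap_at)

lemma measurable_Gap_at_coordinate: "i \<in> K \<Longrightarrow> (\<lambda>\<omega>. \<omega> i) \<in> borel_measurable (PiM K Gap_at)"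
  by (rule measurable_PiM_coordinate) (auto split: prod.split)

lemma measurable_P_coordinate[measurable]: "l < n \<Longrightarrow> (\<lambda>\<omega>. \<omega> (l, k)) \<in> borel_measurable P"
  unfolding P_eq by (rule measurable_Gap_at_coordinate) simp

lemma AE_P_nonneg: "AE \<omega> in P. \<forall>l<n. \<forall>k. 0 \<le> \<omega> (l, k)"
proof -
  have "AE \<omega> in P. 0 \<le> \<omega> (l, k)" if "l < n" for l k
  proof -
    have "AE y in density lborel (exponential_density (\<mu> l)). 0 \<le> y"
      by (subst AE_density) (auto simp: erlang_density_def)
    then have "AE y in Gap_at (l, k). 0 \<le> y" by (subst case_prod_conv)
    then show ?thesis unfolding P_eq using that
      by (intro AE_PiM_component[where P="\<lambda>y. 0 \<le> y", OF prob_space_Gap_at]) auto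
  qed
  then show ?thesis by (simp add: AE_all_countable AE_ball_countable)
qed

lemma nn_integral_P_restrict:
  assumes "B \<subseteq> Idx" and [measurable]: "f \<in> borel_measurable (PiM B Gap_at)"
  shows "(\<integral>\<^sup>+z. f z \<partial>PiM B Gap_at) = (\<integral>\<^sup>+\<omega>. f (restrict \<omega> B) \<partial>P)"
proof -
  have "(\<integral>\<^sup>+z. f z \<partial>PiM B Gap_at) = (\<integral>\<^sup>+z. f z \<partial>distr P (PiM B Gap_at) (\<lambda>\<omega>. restrict \<omega> B))"
    unfolding P_eq using assms(1) by (simp add: distr_PiM_restrict prob_space_Gap_at)
  also have "\<dots> = (\<integral>\<^sup>+\<omega>. f (restrict \<omega> B) \<partial>P)"
    unfolding P_eq using assms(1) by (intro nn_integral_distr measurable_restrict_subset) auto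
  finally show ?thesis .
qed

lemma nn_integral_P_split:
  assumes "0 < n" "A \<subseteq> Idx" "B \<subseteq> Idx" "A \<inter> B = {}"
    and [measurable]: "H \<in> borel_measurable (PiM A Gap_at \<Otimes>\<^sub>M PiM B Gap_at)"
  shows "(\<integral>\<^sup>+\<omega>. H (restrict \<omega> A, restrict \<omega> B) \<partial>P) = (\<integral>\<^sup>+y. \<integral>\<^sup>+z. H (y, z) \<partial>PiM B Gap_at \<partial>PiM A Gap_at)"
proof -
  interpret PB: prob_space "PiM B Gap_at" using assms by (intro prob_space_PiM prob_space_Gap_at) auto
  have "(\<integral>\<^sup>+\<omega>. H (restrict \<omega> A, restrict \<omega> B) \<partial>P) =
      (\<integral>\<^sup>+p. H p \<partial>distr P (PiM A Gap_at \<Otimes>\<^sub>M PiM B Gap_at) (\<lambda>\<omega>. (restrict \<omega> A, restrict \<omega> B)))"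
    using assms unfolding P_eq
    by (intro nn_integral_distr[symmetric] measurable_Pair measurable_restrict_subset) auto
  also have "distr P (PiM A Gap_at \<Otimes>\<^sub>M PiM B Gap_at) (\<lambda>\<omega>. (restrict \<omega> A, restrict \<omega> B)) =
      PiM A Gap_at \<Otimes>\<^sub>M PiM B Gap_at"
    using assms unfolding P_eq by (intro distr_PiM_restrict_pair prob_space_Gap_at) auto
  also have "(\<integral>\<^sup>+p. H p \<partial>(PiM A Gap_at \<Otimes>\<^sub>M PiM B Gap_at)) =
      (\<integral>\<^sup>+y. \<integral>\<^sup>+z. H (y, z) \<partial>PiM B Gap_at \<partial>PiM A Gap_at)"
    by (rule PB.nn_integral_fst[symmetric]) simp
  finally show ?thesis .
qed

lemma nn_integral_P_row:
  assumes "l < n" and f: "f \<in> borel_measurable (PiM UNIV (\<lambda>_. density lborel (exponential_density (\<mu> l))))"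
  shows "(\<integral>\<^sup>+y. f (\<lambda>k. y (l, k)) \<partial>PiM ({l} \<times> UNIV) Gap_at) =
    (\<integral>\<^sup>+x. f x \<partial>PiM UNIV (\<lambda>_. density lborel (exponential_density (\<mu> l))))"
proof -
  let ?Row = "PiM UNIV (\<lambda>_::nat. density lborel (exponential_density (\<mu> l)))"
  have "(\<lambda>y k. y (l, k)) \<in> measurable (PiM ({l} \<times> UNIV) Gap_at) (PiM UNIV (\<lambda>_. borel))"
    by (intro measurable_PiM_single' measurable_Gap_at_coordinate) auto
  moreover have "sets (PiM UNIV (\<lambda>_::nat. borel)) = sets ?Row" by (intro sets_PiM_cong) auto
  ultimately have "(\<lambda>y k. y (l, k)) \<in> measurable (PiM ({l} \<times> UNIV) Gap_at) ?Row"
    using measurable_cong_sets by fastforce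
  then have "(\<integral>\<^sup>+y. f (\<lambda>k. y (l, k)) \<partial>PiM ({l} \<times> UNIV) Gap_at) =
      (\<integral>\<^sup>+x. f x \<partial>distr (PiM ({l} \<times> UNIV) Gap_at) ?Row (\<lambda>y k. y (l, k)))"
    using f by (intro nn_integral_distr[symmetric]) auto
  also have "distr (PiM ({l} \<times> UNIV) Gap_at) ?Row (\<lambda>y k. y (l, k)) = ?Row"
    using distr_PiM_row[of "{l} \<times> UNIV" Gap_at l] assms prob_space_Gap_at by auto
  finally show ?thesis .
qed

lemma measurable_renewal_integrand:
  assumes g_meas: "(\<lambda>p. g (fst p) (snd p)) \<in> borel_measurable (N \<Otimes>\<^sub>M borel)"
  shows "(\<lambda>p. if num_events (fst p) l t = 0 then c else g (snd p) (t - last_event (fst p) l t))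
    \<in> borel_measurable (PiM ({l} \<times> UNIV) Gap_at \<Otimes>\<^sub>M N)"
proof -
  let ?M = "PiM ({l} \<times> UNIV) Gap_at \<Otimes>\<^sub>M N"
  have [measurable]: "(\<lambda>y. y (l, k)) \<in> borel_measurable (PiM ({l} \<times> UNIV) Gap_at)" for k
    by (rule measurable_Gap_at_coordinate) simp
  have [measurable]: "(\<lambda>p. num_events (fst p) l t) \<in> measurable ?M (count_space UNIV)"
    by (rule measurable_num_events) auto
  have [measurable]: "(\<lambda>p. last_event (fst p) l t) \<in> borel_measurable ?M"
    by (rule measurable_last_event) auto
  have "(\<lambda>p. (snd p, t - last_event (fst p) l t)) \<in> measurable ?M (N \<Otimes>\<^sub>M borel)"
    by measurable
  from measurable_compose[OF this g_meas]
  have [measurable]: "(\<lambda>p. g (snd p) (t - last_event (fst p) l t)) \<in> borel_measurable ?M"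
    by simp
  show ?thesis by measurable
qed

text \<open>Renewal over one process: a \<open>g\<close> that only looks at the other processes is independent of
  process \<open>l\<close>, whose time since its last event then has the truncated exponential law of
  \<open>iid_exponential.nn_integral_last_event\<close>.\<close>

lemma nn_integral_renewal_process:
  fixes g :: "(nat \<times> nat \<Rightarrow> real) \<Rightarrow> real \<Rightarrow> ennreal" and l :: nat
  defines "B \<equiv> Idx - {l} \<times> UNIV"
  assumes l: "l < n" and t: "0 \<le> t"
    and g_meas: "(\<lambda>p. g (fst p) (snd p)) \<in> borel_measurable (PiM B Gap_at \<Otimes>\<^sub>M borel)"
    and g_local: "\<And>\<omega> a. g (restrict \<omega> B) a = g \<omega> a"
  shows "(\<integral>\<^sup>+\<omega>. (if num_events \<omega> l t = 0 then c else g \<omega> (t - last_event \<omega> l t)) \<partial>P) =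
    ennreal (exp (- \<mu> l * t)) * c +
    (\<integral>\<^sup>+a. ennreal (indicator {..t} a * exponential_density (\<mu> l) a) * (\<integral>\<^sup>+\<omega>. g \<omega> a \<partial>P) \<partial>lborel)"
proof -
  interpret E: iid_exponential "\<mu> l" using \<mu>_pos[OF l] by unfold_locales
  define A where "A = {l} \<times> (UNIV :: nat set)"
  have AB: "A \<subseteq> Idx" "B \<subseteq> Idx" "A \<inter> B = {}" using l by (auto simp: A_def B_def)
  interpret PB: prob_space "PiM B Gap_at" using AB by (intro prob_space_PiM prob_space_Gap_at) auto
  have [measurable]: "(\<lambda>z. g z a) \<in> borel_measurable (PiM B Gap_at)" for a
    using measurable_compose[OF measurable_Pair2' g_meas] by simp
  define hP where "hP a = (\<integral>\<^sup>+\<omega>. g \<omega> a \<partial>P)" for a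
  have hP_eq: "hP a = (\<integral>\<^sup>+z. g z a \<partial>PiM B Gap_at)" for a
    by (simp add: hP_def nn_integral_P_restrict[OF AB(2)] g_local)
  have [measurable]: "hP \<in> borel_measurable borel"
  proof -
    have "(\<lambda>(a, z). g z a) \<in> borel_measurable (borel \<Otimes>\<^sub>M PiM B Gap_at)"
      using g_meas by (subst measurable_pair_swap_iff) (simp add: case_prod_beta)
    then show ?thesis unfolding hP_eq by (rule PB.borel_measurable_nn_integral)
  qed
  define H where "H p = (if num_events (fst p) l t = 0 then c else g (snd p) (t - last_event (fst p) l t))" for p
  have [measurable]: "H \<in> borel_measurable (PiM A Gap_at \<Otimes>\<^sub>M PiM B Gap_at)"
    unfolding H_def A_def using g_meas by (rule measurable_renewal_integrand)
  define G where "G x = (if num_events (gaps_path x) 0 t = 0 then c else hP (t - last_event (gaps_path x) 0 t))" for x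
  have "(\<integral>\<^sup>+\<omega>. (if num_events \<omega> l t = 0 then c else g \<omega> (t - last_event \<omega> l t)) \<partial>P) =
      (\<integral>\<^sup>+\<omega>. H (restrict \<omega> A, restrict \<omega> B) \<partial>P)"
    using num_events_cong[of \<omega> l "restrict \<omega> A" l t for \<omega>] last_event_cong[of \<omega> l "restrict \<omega> A" l t for \<omega>]
    by (intro nn_integral_cong) (simp add: H_def g_local A_def)
  also have "\<dots> = (\<integral>\<^sup>+y. \<integral>\<^sup>+z. H (y, z) \<partial>PiM B Gap_at \<partial>PiM A Gap_at)"
    using l AB by (intro nn_integral_P_split) auto
  also have "\<dots> = (\<integral>\<^sup>+y. G (\<lambda>k. y (l, k)) \<partial>PiM A Gap_at)"
    using num_events_cong[of "gaps_path (\<lambda>k. y (l, k))" 0 y l t for y]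
      last_event_cong[of "gaps_path (\<lambda>k. y (l, k))" 0 y l t for y]
    by (intro nn_integral_cong) (simp add: G_def H_def hP_eq PB.emeasure_space_1)
  also have "\<dots> = (\<integral>\<^sup>+x. G x \<partial>E.Gaps)"
    unfolding A_def G_def by (intro nn_integral_P_row l) measurable
  finally show ?thesis
    unfolding G_def by (simp add: E.nn_integral_last_event[OF t] hP_def)
qed

definition age_moment :: "nat \<Rightarrow> nat \<Rightarrow> real \<Rightarrow> real" where
  "age_moment j k t = (\<integral>\<omega>. age x0 \<omega> j t ^ k \<partial>P)"

abbreviation x0_sum :: "nat \<Rightarrow> real" where
  "x0_sum j \<equiv> \<Sum>i\<le>j. x0 i"

lemma x0_sum_nonneg: "j < n \<Longrightarrow> 0 \<le> x0_sum j"
  by (intro sum_nonneg x0_nonneg) auto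

lemma measurable_age_P[measurable]: "j < n \<Longrightarrow> (\<lambda>\<omega>. age x0 \<omega> j t) \<in> borel_measurable P"
  by (rule measurable_age) (auto intro: measurable_P_coordinate)

lemma AE_age_bounds:
  assumes "j < n" "0 \<le> t"
  shows "AE \<omega> in P. 0 \<le> age x0 \<omega> j t \<and> age x0 \<omega> j t \<le> t + x0_sum j"
  using AE_P_nonneg by eventually_elim (rule age_bounds; use assms in \<open>auto intro: x0_nonneg\<close>)

lemma integrable_age_power:
  assumes "j < n" "0 \<le> t" "0 \<le> a"
  shows "integrable P (\<lambda>\<omega>. (age x0 \<omega> j t + a) ^ k)"
proof (rule P.integrable_const_bound[where B="(t + x0_sum j + a) ^ k"])
  show "AE \<omega> in P. norm ((age x0 \<omega> j t + a) ^ k) \<le> (t + x0_sum j + a) ^ k"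
    using AE_age_bounds[OF assms(1,2)]
    by eventually_elim (use assms in \<open>auto simp: power_abs intro!: power_mono\<close>)
qed (use assms in measurable)

lemma age_moment_bounds:
  assumes "j < n" "0 \<le> t"
  shows "0 \<le> age_moment j k t" "age_moment j k t \<le> (t + x0_sum j) ^ k"
proof -
  show "0 \<le> age_moment j k t" unfolding age_moment_def
    using AE_age_bounds[OF assms] by (intro integral_nonneg_AE) (auto elim: eventually_mono)
  have "AE \<omega> in P. age x0 \<omega> j t ^ k \<le> (t + x0_sum j) ^ k"
    using AE_age_bounds[OF assms] by eventually_elim (auto intro: power_mono)
  then have "age_moment j k t \<le> (\<integral>\<omega>. (t + x0_sum j) ^ k \<partial>P)" unfolding age_moment_def
    using integrable_age_power[OF assms order_refl, of k] by (intro integral_mono_AE) auto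
  then show "age_moment j k t \<le> (t + x0_sum j) ^ k" by (simp add: P.prob_space)
qed

lemma measurable_age_moment[measurable]: "j < n \<Longrightarrow> age_moment j k \<in> borel_measurable borel"
proof -
  assume j: "j < n"
  have [measurable]: "(\<lambda>p. age x0 (snd p) j (fst p)) \<in> borel_measurable (borel \<Otimes>\<^sub>M P)"
    using j by (intro measurable_age) (auto intro: measurable_compose[OF measurable_snd])
  have "(\<lambda>(t, \<omega>). age x0 \<omega> j t ^ k) \<in> borel_measurable (borel \<Otimes>\<^sub>M P)"
    by (simp add: case_prod_beta') measurable
  then show ?thesis unfolding age_moment_def[abs_def] by measurable
qed

lemma nn_integral_age_power:
  assumes "j < n" "0 \<le> s" "0 \<le> a"
  shows "(\<integral>\<^sup>+\<omega>. ennreal ((age x0 \<omega> j s + a) ^ m) \<partial>P) =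
    ennreal (\<Sum>k\<le>m. of_nat (m choose k) * a ^ (m - k) * age_moment j k s)"
proof -
  have "(\<integral>\<^sup>+\<omega>. ennreal ((age x0 \<omega> j s + a) ^ m) \<partial>P) = ennreal (\<integral>\<omega>. (age x0 \<omega> j s + a) ^ m \<partial>P)"
    using AE_age_bounds[OF assms(1,2)] assms
    by (intro nn_integral_eq_integral integrable_age_power) (auto elim!: eventually_mono)
  also have "(\<integral>\<omega>. (age x0 \<omega> j s + a) ^ m \<partial>P) =
      (\<integral>\<omega>. (\<Sum>k\<le>m. of_nat (m choose k) * a ^ (m - k) * age x0 \<omega> j s ^ k) \<partial>P)"
    by (simp add: binomial_ring mult_ac)
  also have "\<dots> = (\<Sum>k\<le>m. of_nat (m choose k) * a ^ (m - k) * age_moment j k s)"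
    using integrable_age_power[OF assms(1,2) order_refl] by (simp add: age_moment_def)
  finally show ?thesis .
qed

lemma nn_integral_age_0:
  assumes n: "0 < n" and t: "0 \<le> t" and [measurable]: "F \<in> borel_measurable borel"
  shows "(\<integral>\<^sup>+\<omega>. F (age x0 \<omega> 0 t) \<partial>P) = ennreal (exp (- \<mu> 0 * t)) * F (x0 0 + t)
    + (\<integral>\<^sup>+a. ennreal (indicator {..t} a * exponential_density (\<mu> 0) a) * F a \<partial>lborel)"
  using nn_integral_renewal_process[OF n t, of "\<lambda>_ a. F a" "F (x0 0 + t)"]
  by (simp add: if_distrib P.emeasure_space_1)

lemma nn_integral_age_Suc:
  assumes j: "Suc j < n" and t: "0 \<le> t" and [measurable]: "F \<in> borel_measurable borel"
  shows "(\<integral>\<^sup>+\<omega>. F (age x0 \<omega> (Suc j) t) \<partial>P) = ennreal (exp (- \<mu> (Suc j) * t)) * F (x0 (Suc j) + t)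
    + (\<integral>\<^sup>+a. ennreal (indicator {..t} a * exponential_density (\<mu> (Suc j)) a) *
         (\<integral>\<^sup>+\<omega>. F (age x0 \<omega> j (t - a) + a) \<partial>P) \<partial>lborel)"
proof -
  let ?B = "Idx - {Suc j} \<times> UNIV"
  have "(\<lambda>p. age x0 (fst p) j (t - snd p)) \<in> borel_measurable (PiM ?B Gap_at \<Otimes>\<^sub>M borel)"
    using j by (intro measurable_age measurable_compose[OF measurable_fst] measurable_Gap_at_coordinate) auto
  then have "(\<lambda>p. F (age x0 (fst p) j (t - snd p) + snd p)) \<in> borel_measurable (PiM ?B Gap_at \<Otimes>\<^sub>M borel)"
    by measurable
  moreover have "age x0 (restrict \<omega> ?B) j s = age x0 \<omega> j s" for \<omega> s
    using j by (intro age_cong) auto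
  ultimately show ?thesis
    using nn_integral_renewal_process[OF j t, of "\<lambda>\<omega> a. F (age x0 \<omega> j (t - a) + a)" "F (x0 (Suc j) + t)"]
    by (simp add: if_distrib cong: if_cong)
qed

lemma nn_integral_age_moment:
  "j < n \<Longrightarrow> 0 \<le> t \<Longrightarrow> (\<integral>\<^sup>+\<omega>. ennreal (age x0 \<omega> j t ^ m) \<partial>P) = ennreal (age_moment j m t)"
  using integrable_age_power[of j t 0 m] AE_age_bounds[of j t]
  by (auto simp: age_moment_def intro!: nn_integral_eq_integral elim!: eventually_mono)

lemma age_moment_0_renewal:
  assumes n: "0 < n" and t: "0 \<le> t"
  shows "age_moment 0 m t = exp (- \<mu> 0 * t) * (x0 0 + t) ^ m + exp_conv (\<mu> 0) m (\<lambda>_. 1) t"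
  unfolding exp_conv_def
proof (rule ennreal_exp_add_integral_eqD)
  have \<mu>: "0 < \<mu> 0" using \<mu>_pos[OF n] .
  have "ennreal (age_moment 0 m t) = (\<integral>\<^sup>+\<omega>. ennreal (age x0 \<omega> 0 t ^ m) \<partial>P)"
    using nn_integral_age_moment[OF n t] by simp
  also have "\<dots> = ennreal (exp (- \<mu> 0 * t)) * ennreal ((x0 0 + t) ^ m)
      + (\<integral>\<^sup>+a. ennreal (indicator {..t} a * exponential_density (\<mu> 0) a) * ennreal (a ^ m) \<partial>lborel)"
    by (rule nn_integral_age_0[OF n t]) measurable
  also have "(\<integral>\<^sup>+a. ennreal (indicator {..t} a * exponential_density (\<mu> 0) a) * ennreal (a ^ m) \<partial>lborel)
      = (\<integral>\<^sup>+a. ennreal (indicator {..t} a * (exponential_density (\<mu> 0) a * a ^ m) * 1) \<partial>lborel)"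
    using \<mu> by (intro nn_integral_cong) (auto simp: erlang_density_def ennreal_mult[symmetric] mult_ac)
  finally show "ennreal (age_moment 0 m t) = ennreal (exp (- \<mu> 0 * t)) * ennreal ((x0 0 + t) ^ m)
      + (\<integral>\<^sup>+a. ennreal (indicator {..t} a * (exponential_density (\<mu> 0) a * a ^ m) * 1) \<partial>lborel)" .
  show "integrable lborel (\<lambda>a. indicator {..t} a * (exponential_density (\<mu> 0) a * a ^ m) * 1)"
    by (rule integrable_exp_conv[OF \<mu>, where B=1]) auto
  show "0 \<le> indicator {..t} a * (exponential_density (\<mu> 0) a * a ^ m) * 1" for a
    using exponential_density_mult_power_nonneg[OF \<mu>] by simp
  show "0 \<le> age_moment 0 m t" using age_moment_bounds[OF n t] by simp
  show "0 \<le> (x0 0 + t) ^ m" using x0_nonneg[OF n] t by simp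
qed simp

lemma integrable_exp_conv_age_moment:
  assumes j: "j < n" and "0 < \<nu>" "0 \<le> t"
  shows "integrable lborel (\<lambda>a. indicator {..t} a * (exponential_density \<nu> a * a ^ p) * age_moment j k (t - a))"
proof -
  have "\<bar>age_moment j k s\<bar> \<le> (t + x0_sum j) ^ k" if "0 \<le> s" "s \<le> t" for s
  proof -
    have "\<bar>age_moment j k s\<bar> \<le> (s + x0_sum j) ^ k" using age_moment_bounds[OF j that(1)] by simp
    also have "\<dots> \<le> (t + x0_sum j) ^ k" using that x0_sum_nonneg[OF j] by (intro power_mono) auto
    finally show ?thesis .
  qed
  then show ?thesis
    using x0_sum_nonneg[OF j] assms
    by (intro integrable_exp_conv[OF \<open>0 < \<nu>\<close> measurable_age_moment[OF j], of "(t + x0_sum j) ^ k"]) auto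
qed

lemma age_moment_Suc_renewal:
  assumes j: "Suc j < n" and t: "0 \<le> t"
  shows "age_moment (Suc j) m t = exp (- \<mu> (Suc j) * t) * (x0 (Suc j) + t) ^ m +
    (\<Sum>k\<le>m. of_nat (m choose k) * exp_conv (\<mu> (Suc j)) (m - k) (age_moment j k) t)"
proof -
  let ?\<mu> = "\<mu> (Suc j)"
  have \<mu>: "0 < ?\<mu>" using \<mu>_pos[OF j] .
  have jn: "j < n" using j by simp
  define \<psi>\<^sub>k where "\<psi>\<^sub>k k a = indicator {..t} a * (exponential_density ?\<mu> a * a ^ (m - k)) * age_moment j k (t - a)"
    for k a
  define \<psi> where "\<psi> a = (\<Sum>k\<le>m. of_nat (m choose k) * \<psi>\<^sub>k k a)" for a
  have int: "integrable lborel (\<psi>\<^sub>k k)" for k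
    unfolding \<psi>\<^sub>k_def using jn \<mu> t by (rule integrable_exp_conv_age_moment)
  have \<psi>_nonneg: "0 \<le> \<psi>\<^sub>k k a" for k a
    using age_moment_bounds(1)[OF jn, of "t - a" k] exponential_density_mult_power_nonneg[OF \<mu>, of a "m - k"]
    by (cases "a \<le> t") (auto simp: \<psi>\<^sub>k_def)
  have "ennreal (indicator {..t} a * exponential_density ?\<mu> a) *
      (\<integral>\<^sup>+\<omega>. ennreal ((age x0 \<omega> j (t - a) + a) ^ m) \<partial>P) = ennreal (\<psi> a)" for a
  proof (cases "0 \<le> a \<and> a \<le> t")
    case True
    have "indicator {..t} a * exponential_density ?\<mu> a *
        (\<Sum>k\<le>m. of_nat (m choose k) * a ^ (m - k) * age_moment j k (t - a)) = \<psi> a"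
      by (simp add: \<psi>_def \<psi>\<^sub>k_def sum_distrib_left mult_ac)
    moreover have "0 \<le> (\<Sum>k\<le>m. of_nat (m choose k) * a ^ (m - k) * age_moment j k (t - a))"
      using True age_moment_bounds(1)[OF jn] by (intro sum_nonneg mult_nonneg_nonneg) auto
    ultimately show ?thesis
      using True \<mu> by (simp add: nn_integral_age_power[OF jn] ennreal_mult[symmetric])
  qed (auto simp: \<psi>_def \<psi>\<^sub>k_def erlang_density_def)
  then have "ennreal (age_moment (Suc j) m t) =
      ennreal (exp (- ?\<mu> * t)) * ennreal ((x0 (Suc j) + t) ^ m) + (\<integral>\<^sup>+a. ennreal (\<psi> a) \<partial>lborel)"
    using nn_integral_age_Suc[OF j t, of "\<lambda>x. ennreal (x ^ m)"] nn_integral_age_moment[OF j t] by simp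
  then have "age_moment (Suc j) m t = exp (- ?\<mu> * t) * (x0 (Suc j) + t) ^ m + (\<integral>a. \<psi> a \<partial>lborel)"
    using int \<psi>_nonneg age_moment_bounds(1)[OF j t] x0_nonneg[OF j] t
    by (intro ennreal_exp_add_integral_eqD) (auto simp: \<psi>_def intro!: sum_nonneg)
  also have "(\<integral>a. \<psi> a \<partial>lborel) = (\<Sum>k\<le>m. of_nat (m choose k) * exp_conv ?\<mu> (m - k) (age_moment j k) t)"
    using int by (simp add: \<psi>_def exp_conv_def \<psi>\<^sub>k_def[abs_def])
  finally show ?thesis .
qed

lemma tendsto_age_moment: "j < n \<Longrightarrow> (age_moment j k \<longlongrightarrow> fact k * Upow_colsum \<mu> n k j) at_top"
proof (induction j arbitrary: k)
  case 0
  have \<mu>: "0 < \<mu> 0" using \<mu>_pos[OF 0] .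
  have "((\<lambda>t. exp (- \<mu> 0 * t) * (x0 0 + t) ^ k + exp_conv (\<mu> 0) k (\<lambda>_. 1) t)
      \<longlongrightarrow> 0 + 1 * (fact k / \<mu> 0 ^ k)) at_top"
    by (intro tendsto_add tendsto_exp_mult_power[OF \<mu>] tendsto_exp_conv[OF \<mu>, where B=1]) auto
  also have "0 + 1 * (fact k / \<mu> 0 ^ k) = fact k * Upow_colsum \<mu> n k 0"
    using 0 by (simp add: Upow_colsum_first_column power_one_over)
  finally show ?case
    by (rule Lim_transform_eventually)
       (use eventually_ge_at_top[of 0] in \<open>eventually_elim, simp add: age_moment_0_renewal[OF 0]\<close>)
next
  case (Suc j)
  let ?\<mu> = "\<mu> (Suc j)"
  have \<mu>: "0 < ?\<mu>" using \<mu>_pos[OF Suc.prems] .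
  have jn: "j < n" using Suc.prems by simp
  have IH: "(age_moment j i \<longlongrightarrow> fact i * Upow_colsum \<mu> n i j) at_top" for i
    by (rule Suc.IH[OF jn])
  have bounded: "\<exists>B. \<forall>s\<ge>0. \<bar>age_moment j i s\<bar> \<le> B" for i
    using age_moment_bounds[OF jn] x0_sum_nonneg[OF jn]
    by (intro bounded_nonneg_if_tendsto[OF IH]) auto
  have "((\<lambda>t. exp (- ?\<mu> * t) * (x0 (Suc j) + t) ^ k +
      (\<Sum>i\<le>k. of_nat (k choose i) * exp_conv ?\<mu> (k - i) (age_moment j i) t))
    \<longlongrightarrow> 0 + (\<Sum>i\<le>k. of_nat (k choose i) * ((fact i * Upow_colsum \<mu> n i j) * (fact (k - i) / ?\<mu> ^ (k - i))))) at_top"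
  proof (intro tendsto_add tendsto_exp_mult_power[OF \<mu>] tendsto_sum tendsto_mult tendsto_const)
    fix i
    obtain B where "\<forall>s\<ge>0. \<bar>age_moment j i s\<bar> \<le> B" using bounded by blast
    then show "(exp_conv ?\<mu> (k - i) (age_moment j i) \<longlongrightarrow> (fact i * Upow_colsum \<mu> n i j) * (fact (k - i) / ?\<mu> ^ (k - i))) at_top"
      by (intro tendsto_exp_conv[OF \<mu>, where B=B] IH measurable_age_moment[OF jn]) auto
  qed
  also have "0 + (\<Sum>i\<le>k. of_nat (k choose i) * ((fact i * Upow_colsum \<mu> n i j) * (fact (k - i) / ?\<mu> ^ (k - i))))
     = fact k * Upow_colsum \<mu> n k (Suc j)"
    by (simp only: add_0_left Upow_colsum_Suc_column[OF Suc.prems] binomial_factorial_sum)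
  finally show ?case
    by (rule Lim_transform_eventually)
       (use eventually_ge_at_top[of 0] in \<open>eventually_elim, simp add: age_moment_Suc_renewal[OF Suc.prems]\<close>)
qed

end

theorem theorem4:
  fixes n m :: nat and \<mu> x0 :: "nat \<Rightarrow> real"
  assumes "\<forall>l<n. \<mu> l > 0" and "\<forall>j<n. x0 j \<ge> 0" and "m \<ge> 1"
  shows "\<forall>j<n. (\<forall>t\<ge>0. integrable (line_space \<mu> n) (\<lambda>\<omega>. age x0 \<omega> j t ^ m)) \<and>
           ((\<lambda>t. \<integral>\<omega>. age x0 \<omega> j t ^ m \<partial>line_space \<mu> n)
              \<longlongrightarrow> fact m * (\<Sum>i<n. mat_pow n (Umat \<mu> n) m i j)) at_top"
proof -
  interpret line \<mu> n x0 using assms(1,2) by unfold_locales auto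
  show ?thesis
  proof (intro allI impI conjI)
    fix j :: nat and t :: real assume "j < n" "0 \<le> t"
    then show "integrable P (\<lambda>\<omega>. age x0 \<omega> j t ^ m)"
      using integrable_age_power[of j t 0 m] by simp
  next
    fix j assume "j < n"
    then show "((\<lambda>t. \<integral>\<omega>. age x0 \<omega> j t ^ m \<partial>P) \<longlongrightarrow> fact m * (\<Sum>i<n. mat_pow n (Umat \<mu> n) m i j)) at_top"
      using tendsto_age_moment[of j m] unfolding age_moment_def[abs_def] Upow_colsum_def by simp
  qed
qed

end
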